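(* Let $n_1,n_2>1$ and let $\mu_j$ ($j=1,2$) be the measure $d\mu_j(r)=r^{n_j-1}dr$ on $[1,\infty)$. Let $\beta'\ge0$, $\alpha'>0$ and define $$R_2(f)(x)=x^{-\alpha'}\int_1^x y^{-\beta'}f(y)\,d\mu_1(y),\qquad x\ge1.$$ Let $1<p<\infty$ with $p'=p/(p-1)$. Then $R_2$ is bounded from $L^{p,1}([1,\infty),d\mu_1)$ to $L^{q,\infty}([1,\infty),d\mu_2)$ provided $$q\ge\begin{cases}\frac{n_2}{\alpha'}, & \text{if } p'\ge\frac{n_1}{\beta'},\\[2pt] \frac{n_2}{\alpha'+\beta'-n_1/p'}, & \text{if } p'<\frac{n_1}{\beta'},\end{cases}$$ where $n_1/\beta'$ is interpreted as $+\infty$ when $\beta'=0$.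
   Context: Lorentz spaces on a measure space $(X,\mu)$: for measurable $f$, $d_f(s)=\mu(\{|f|>s\})$, $f^*(t)=\inf\{s>0:d_f(s)\le t\}$, $\|f\|_{(p,1)}=\int_0^\infty t^{1/p}f^*(t)\frac{dt}{t}$ and $\|f\|_{(q,\infty)}=\sup_{t>0}t^{1/q}f^*(t)$; $L^{p,1}$ and $L^{q,\infty}$ are the spaces where these quantities are finite. *)

theory Defs
  imports "HOL-Analysis.Analysis"
begin

text \<open>The measure d mu(r) = r^(n-1) dr on [1,infinity), realised on the real line
  (the complement of [1,infinity) is a null set).\<close>
definition radial_measure :: "real \<Rightarrow> real measure" where
  "radial_measure n = density lborel (\<lambda>r. indicator {1..} r * ennreal (r powr (n - 1)))"

definition distfun :: "'a measure \<Rightarrow> ('a \<Rightarrow> real) \<Rightarrow> real \<Rightarrow> ennreal" where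
  "distfun M f s = emeasure M {x \<in> space M. \<bar>f x\<bar> > s}"

text \<open>Decreasing rearrangement f*(t) = inf {s > 0. d_f(s) \<le> t} (inf of the empty set is infinity).\<close>
definition rearr :: "'a measure \<Rightarrow> ('a \<Rightarrow> real) \<Rightarrow> real \<Rightarrow> ennreal" where
  "rearr M f t = Inf {ennreal s | s. s > 0 \<and> distfun M f s \<le> ennreal t}"

definition lorentz_p1 :: "'a measure \<Rightarrow> real \<Rightarrow> ('a \<Rightarrow> real) \<Rightarrow> ennreal" where
  "lorentz_p1 M p f = (\<integral>\<^sup>+ t \<in> {0<..}. ennreal (t powr (1 / p) / t) * rearr M f t \<partial>lborel)"

definition lorentz_qinf :: "'a measure \<Rightarrow> real \<Rightarrow> ('a \<Rightarrow> real) \<Rightarrow> ennreal" where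
  "lorentz_qinf M q f = (SUP t \<in> {0<..}. ennreal (t powr (1 / q)) * rearr M f t)"

definition R2 :: "real \<Rightarrow> real \<Rightarrow> real \<Rightarrow> (real \<Rightarrow> real) \<Rightarrow> real \<Rightarrow> real" where
  "R2 n1 \<alpha>' \<beta>' f x = x powr (- \<alpha>') * (LINT y:{1..x}|radial_measure n1. y powr (- \<beta>') * f y)"

end

theory Submission
  imports Defs
begin

text \<open>Let b = n1/p'. The weight y^(-b) is of weak type L^(p',infinity) for mu_1: every Borel set E
  satisfies the bound integral_E y^(-b) d mu_1 <= C mu_1(E)^(1/p), obtained by splitting E at the
  radius r with r^(n1) = mu_1(E). Integrating this bound over the level sets of f (layer cake) and
  comparing integral_0^infinity d_f(s)^(1/p) ds with the Lorentz norm gives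
  integral y^(-b) |f| d mu_1 <= C ||f||_(p,1). On [1,x] we have y^(-beta') <= x^e y^(-b) with
  e = max 0 (b - beta'), hence |R_2 f(x)| <= C ||f||_(p,1) x^(-gamma) with gamma = alpha' - e > 0.
  Finally a function bounded by A x^(-gamma) on [1,infinity) and vanishing elsewhere has
  ||F||_(q,infinity) <= A for q >= n2/gamma, because mu_2([1,R]) <= R^n2; the hypothesis on q
  says exactly q >= n2/gamma.\<close>

section \<open>The radial measure\<close>

definition radial_weight :: "real \<Rightarrow> real \<Rightarrow> real" where
  "radial_weight n r = indicator {1..} r * r powr (n - 1)"

lemma radial_weight_nonneg: "0 \<le> radial_weight n r"
  by (simp add: radial_weight_def)

lemma radial_weight_measurable [measurable]: "radial_weight n \<in> borel_measurable borel"
  unfolding radial_weight_def by measurable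

lemma radial_measure_eq_density:
  "radial_measure n = density lborel (\<lambda>r. ennreal (radial_weight n r))"
  unfolding radial_measure_def radial_weight_def
  by (intro arg_cong[where f="density lborel"] ext) (auto simp: indicator_def)

lemma space_radial_measure [simp]: "space (radial_measure n) = UNIV"
  by (simp add: radial_measure_eq_density)

lemma sets_radial_measure [simp, measurable_cong]: "sets (radial_measure n) = sets borel"
  by (simp add: radial_measure_eq_density)

lemma sigma_finite_radial_measure: "sigma_finite_measure (radial_measure n)"
  unfolding radial_measure_eq_density
  by (subst sigma_finite_measure.sigma_finite_iff_density_finite'[OF sigma_finite_lborel]) auto

lemma nn_integral_radial_measure:
  "g \<in> borel_measurable borel \<Longrightarrow>
    (\<integral>\<^sup>+x. g x \<partial>radial_measure n) = (\<integral>\<^sup>+x. ennreal (radial_weight n x) * g x \<partial>lborel)"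
  unfolding radial_measure_eq_density by (subst nn_integral_density) auto

lemma nn_integral_powr_Icc:
  assumes "0 < a" "1 \<le> r"
  shows "(\<integral>\<^sup>+y. ennreal (y powr (a - 1)) * indicator {1..r} y \<partial>lborel) = ennreal ((r powr a - 1) / a)"
proof -
  have "(\<integral>\<^sup>+y. ennreal (y powr (a - 1)) * indicator {1..r} y \<partial>lborel) = r powr a / a - 1 powr a / a"
  proof (rule nn_integral_FTC_Icc)
    fix x :: real assume "x \<in> {1..r}"
    then show "((\<lambda>y. y powr a / a) has_real_derivative x powr (a - 1)) (at x)"
      using assms by (auto intro!: derivative_eq_intros simp: field_simps)
  qed (use assms in auto)
  then show ?thesis by (simp add: diff_divide_distrib)
qed

lemma emeasure_radial_measure_Icc:
  assumes "0 < n" "1 \<le> r"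
  shows "emeasure (radial_measure n) {1..r} = ennreal ((r powr n - 1) / n)"
proof -
  have "emeasure (radial_measure n) {1..r} = (\<integral>\<^sup>+y. ennreal (radial_weight n y) * indicator {1..r} y \<partial>lborel)"
    unfolding radial_measure_eq_density by (simp add: emeasure_density)
  also have "\<dots> = (\<integral>\<^sup>+y. ennreal (y powr (n - 1)) * indicator {1..r} y \<partial>lborel)"
    by (intro nn_integral_cong) (auto simp: radial_weight_def indicator_def)
  finally show ?thesis using nn_integral_powr_Icc[OF assms] by simp
qed

section \<open>Distribution function, rearrangement and the (p,1) norm\<close>

lemma distfun_antimono:
  assumes [measurable]: "f \<in> borel_measurable M" and "s' \<le> s"
  shows "distfun M f s \<le> distfun M f s'"
  unfolding distfun_def using \<open>s' \<le> s\<close> by (intro emeasure_mono) auto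

lemma rearr_leI:
  assumes "0 \<le> s\<^sub>0" and "\<And>s. s\<^sub>0 < s \<Longrightarrow> distfun M f s \<le> ennreal t"
  shows "rearr M f t \<le> ennreal s\<^sub>0"
proof (rule dense_ge)
  fix u assume u: "ennreal s\<^sub>0 < u"
  show "rearr M f t \<le> u"
  proof (cases u rule: ennreal_cases)
    case (real s)
    with u assms(1) have "s\<^sub>0 < s" by (simp add: ennreal_less_iff)
    with assms show ?thesis
      unfolding rearr_def real by (intro Inf_lower) auto
  qed simp
qed

lemma le_rearrI:
  assumes "f \<in> borel_measurable M" and "0 < s" and "ennreal t < distfun M f s"
  shows "ennreal s \<le> rearr M f t"
  unfolding rearr_def
proof (rule Inf_greatest)
  fix u assume "u \<in> {ennreal s' |s'. 0 < s' \<and> distfun M f s' \<le> ennreal t}"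
  then obtain s' where u: "u = ennreal s'" "distfun M f s' \<le> ennreal t" by auto
  have "s \<le> s'"
  proof (rule ccontr)
    assume "\<not> s \<le> s'"
    then have "distfun M f s \<le> distfun M f s'" by (intro distfun_antimono assms(1)) auto
    with u assms(3) show False by auto
  qed
  with u show "ennreal s \<le> u" by (simp add: ennreal_leI)
qed

text \<open>No measurability in s is needed here: only monotonicity of the integral is used.\<close>
lemma nn_integral_distfun_gt_le_rearr:
  assumes "f \<in> borel_measurable M"
  shows "(\<integral>\<^sup>+s. indicator {s. 0 < s \<and> ennreal t < distfun M f s} s \<partial>lborel) \<le> rearr M f t"
proof (cases "rearr M f t" rule: ennreal_cases)
  case (real r)
  have "(\<integral>\<^sup>+s. indicator {s. 0 < s \<and> ennreal t < distfun M f s} s \<partial>lborel)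
      \<le> (\<integral>\<^sup>+s. indicator {0<..r} s \<partial>lborel)"
    using le_rearrI[OF assms, of _ t] real
    by (intro nn_integral_mono) (auto simp: indicator_def ennreal_le_iff)
  also have "\<dots> = rearr M f t" using real by simp
  finally show ?thesis .
qed simp

definition enn_powr :: "ennreal \<Rightarrow> real \<Rightarrow> ennreal" where
  "enn_powr x a = (if x = top then top else ennreal (enn2real x powr a))"

lemma enn_powr_ennreal [simp]: "0 \<le> x \<Longrightarrow> enn_powr (ennreal x) a = ennreal (x powr a)"
  by (simp add: enn_powr_def)

lemma enn_powr_top [simp]: "enn_powr top a = top"
  by (simp add: enn_powr_def)

lemma measurable_enn_powr [measurable (raw)]:
  assumes [measurable]: "g \<in> borel_measurable M"
  shows "(\<lambda>x. enn_powr (g x) a) \<in> borel_measurable M"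
  unfolding enn_powr_def by measurable

lemma powr_le_nn_integral_lorentz_kernel:
  assumes p: "1 \<le> p" and N: "0 < N" "ennreal N \<le> d"
  shows "ennreal (N powr (1/p))
    \<le> (\<integral>\<^sup>+t. ennreal (t powr (1/p) / t) * indicator {t. 0 < t \<and> ennreal t < d} t \<partial>lborel)"
proof -
  have "ennreal (N powr (1/p)) = (\<integral>\<^sup>+t. ennreal (N powr (1/p) / N) * indicator {0<..<N} t \<partial>lborel)"
    using N by (simp add: nn_integral_cmult_indicator ennreal_mult[symmetric])
  also have "\<dots> \<le> (\<integral>\<^sup>+t. ennreal (t powr (1/p) / t) * indicator {t. 0 < t \<and> ennreal t < d} t \<partial>lborel)"
  proof (intro nn_integral_mono)
    fix t :: real
    show "ennreal (N powr (1/p) / N) * indicator {0<..<N} t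
        \<le> ennreal (t powr (1/p) / t) * indicator {t. 0 < t \<and> ennreal t < d} t"
    proof (cases "0 < t \<and> t < N")
      case True
      then have "ennreal t < d"
        using N by (metis ennreal_less_iff less_le_trans less_imp_le)
      moreover have "N powr (1/p - 1) \<le> t powr (1/p - 1)"
        using True p by (intro powr_mono2') auto
      ultimately show ?thesis
        using True N by (auto simp: indicator_def powr_diff intro: ennreal_leI)
    qed (auto simp: indicator_def)
  qed
  finally show ?thesis .
qed

lemma enn_powr_le_nn_integral_lorentz_kernel:
  assumes p: "1 \<le> p"
  shows "enn_powr d (1/p)
    \<le> (\<integral>\<^sup>+t. ennreal (t powr (1/p) / t) * indicator {t. 0 < t \<and> ennreal t < d} t \<partial>lborel)"
    (is "_ \<le> ?I")
proof (cases d rule: ennreal_cases)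
  case (real r)
  then show ?thesis
    using powr_le_nn_integral_lorentz_kernel[OF p, of r d] by (cases "r = 0") (auto simp: enn_powr_def)
next
  case top
  have "?I = \<infinity>"
  proof (rule ccontr)
    assume "?I \<noteq> \<infinity>"
    then obtain c where c: "?I = ennreal c" "0 \<le> c" by (cases ?I) auto
    have "((c + 1) powr p) powr (1/p) = c + 1"
      using c p by (simp add: powr_powr)
    then have "ennreal (c + 1) \<le> ennreal c"
      using powr_le_nn_integral_lorentz_kernel[OF p, of "(c + 1) powr p" d] top c by simp
    with c show False by simp
  qed
  with top show ?thesis by simp
qed

text \<open>Half of the identity ||f||_(p,1) = p integral_0^infinity d_f(s)^(1/p) ds: write d_f(s)^(1/p) as
  an integral in t and swap the integrals, using f*(t) >= |{s > 0. d_f(s) > t}|.\<close>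
lemma nn_integral_distfun_powr_le_lorentz_p1:
  assumes p: "1 \<le> p" and f [measurable]: "f \<in> borel_measurable M"
    and [measurable]: "(\<lambda>s. distfun M f s) \<in> borel_measurable borel"
  shows "(\<integral>\<^sup>+s. enn_powr (distfun M f s) (1/p) * indicator {0<..} s \<partial>lborel) \<le> lorentz_p1 M p f"
proof -
  define K where "K s t = ennreal (t powr (1/p) / t) * indicator {t. 0 < t \<and> ennreal t < distfun M f s} t
    * indicator {0<..} s" for s t
  have [measurable]: "case_prod K \<in> borel_measurable (lborel \<Otimes>\<^sub>M lborel)"
    unfolding K_def by measurable
  have "(\<integral>\<^sup>+s. enn_powr (distfun M f s) (1/p) * indicator {0<..} s \<partial>lborel)
      \<le> (\<integral>\<^sup>+s. \<integral>\<^sup>+t. K s t \<partial>lborel \<partial>lborel)"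
    unfolding K_def using enn_powr_le_nn_integral_lorentz_kernel[OF p]
    by (intro nn_integral_mono) (simp add: nn_integral_multc mult_right_mono)
  also have "\<dots> = (\<integral>\<^sup>+t. \<integral>\<^sup>+s. K s t \<partial>lborel \<partial>lborel)"
    by (rule lborel_pair.Fubini') measurable
  also have "\<dots> \<le> (\<integral>\<^sup>+t. ennreal (t powr (1/p) / t) * rearr M f t * indicator {0<..} t \<partial>lborel)"
  proof (intro nn_integral_mono)
    fix t :: real
    have "(\<integral>\<^sup>+s. K s t \<partial>lborel) = ennreal (t powr (1/p) / t) * indicator {0<..} t
        * (\<integral>\<^sup>+s. indicator {s. 0 < s \<and> ennreal t < distfun M f s} s \<partial>lborel)"
      unfolding K_def
      by (subst nn_integral_cmult[symmetric]) (auto intro!: nn_integral_cong simp: indicator_def)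
    also have "\<dots> \<le> ennreal (t powr (1/p) / t) * indicator {0<..} t * rearr M f t"
      by (intro mult_left_mono nn_integral_distfun_gt_le_rearr f) simp
    finally show "(\<integral>\<^sup>+s. K s t \<partial>lborel) \<le> ennreal (t powr (1/p) / t) * rearr M f t * indicator {0<..} t"
      by (simp add: ac_simps)
  qed
  also have "\<dots> = lorentz_p1 M p f"
    unfolding lorentz_p1_def by simp
  finally show ?thesis .
qed

section \<open>A weighted Hoelder inequality on the radial measure\<close>

lemma measurable_distfun_radial_measure [measurable]:
  assumes [measurable]: "f \<in> borel_measurable borel"
  shows "(\<lambda>s. distfun (radial_measure n) f s) \<in> borel_measurable borel"
proof -
  have "distfun (radial_measure n) f s
      = (\<integral>\<^sup>+x. ennreal (radial_weight n x) * indicator {x. s < \<bar>f x\<bar>} x \<partial>lborel)" for s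
    unfolding distfun_def radial_measure_eq_density by (subst emeasure_density) auto
  then show ?thesis by simp
qed

lemma distfun_radial_measure: "distfun (radial_measure n) f s = emeasure (radial_measure n) {x. s < \<bar>f x\<bar>}"
  by (simp add: distfun_def)

lemma nn_integral_radial_powr_indicator_split:
  assumes b: "0 \<le> b" "b < n" and r: "1 \<le> r" and E [measurable]: "E \<in> sets borel"
  shows "(\<integral>\<^sup>+y. ennreal (y powr -b) * indicator E y \<partial>radial_measure n)
    \<le> ennreal (r powr -b) * emeasure (radial_measure n) E + ennreal ((r powr (n - b) - 1) / (n - b))"
proof -
  let ?w = "radial_weight n"
  have pointwise: "?w y * y powr -b * indicator E y
      \<le> r powr -b * (?w y * indicator E y) + y powr (n - b - 1) * indicator {1..r} y" for y
  proof (cases "1 \<le> y")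
    case True
    show ?thesis
    proof (cases "y \<le> r")
      case True
      with \<open>1 \<le> y\<close> have "?w y * y powr -b = y powr (n - 1 - b)"
        by (simp add: radial_weight_def flip: powr_add)
      also have "n - 1 - b = n - b - 1" by simp
      finally have "?w y * y powr -b = y powr (n - b - 1)" .
      with \<open>1 \<le> y\<close> True show ?thesis
        using radial_weight_nonneg[of n y] by (auto simp: indicator_def)
    next
      case False
      then have "y powr -b \<le> r powr -b"
        using r b by (intro powr_mono2') auto
      with False show ?thesis
        using radial_weight_nonneg[of n y] by (auto simp: indicator_def mult.commute intro: mult_left_mono)
    qed
  qed (auto simp: radial_weight_def)
  have "(\<integral>\<^sup>+y. ennreal (y powr -b) * indicator E y \<partial>radial_measure n)
      = (\<integral>\<^sup>+y. ennreal (?w y * y powr -b * indicator E y) \<partial>lborel)"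
    by (subst nn_integral_radial_measure)
      (auto intro!: nn_integral_cong simp: indicator_def ennreal_mult radial_weight_nonneg)
  also have "\<dots> \<le> (\<integral>\<^sup>+y. ennreal (r powr -b * (?w y * indicator E y)
      + y powr (n - b - 1) * indicator {1..r} y) \<partial>lborel)"
    using pointwise by (intro nn_integral_mono ennreal_leI)
  also have "\<dots> = (\<integral>\<^sup>+y. ennreal (r powr -b) * (ennreal (?w y) * indicator E y)
      + ennreal (y powr (n - b - 1)) * indicator {1..r} y \<partial>lborel)"
    by (intro nn_integral_cong)
      (simp add: ennreal_plus ennreal_mult ennreal_mult' ennreal_indicator radial_weight_nonneg)
  also have "\<dots> = ennreal (r powr -b) * emeasure (radial_measure n) E
      + ennreal ((r powr (n - b) - 1) / (n - b))"
    using nn_integral_powr_Icc[of "n - b" r] b r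
    by (simp add: nn_integral_add nn_integral_cmult radial_measure_eq_density emeasure_density)
  finally show ?thesis .
qed

lemma powr_split_bound_at_optimal_radius:
  fixes b n m :: real
  assumes b: "0 \<le> b" "b < n" and m: "1 < m"
  shows "(m powr (1/n)) powr -b * m + ((m powr (1/n)) powr (n - b) - 1) / (n - b)
    \<le> (1 + 1 / (n - b)) * m powr (1 - b/n)"
proof -
  have n: "0 < n"
    using b by simp
  have "(m powr (1/n)) powr -b * m = m powr (-b/n) * m powr 1"
    using m n by (simp add: powr_powr)
  also have "\<dots> = m powr (1 - b/n)"
    unfolding powr_add[symmetric] by simp
  finally have first: "(m powr (1/n)) powr -b * m = m powr (1 - b/n)" .
  have "(m powr (1/n)) powr (n - b) = m powr (1 - b/n)"
    using m n by (simp add: powr_powr diff_divide_distrib)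
  then have second: "((m powr (1/n)) powr (n - b) - 1) / (n - b) \<le> m powr (1 - b/n) / (n - b)"
    using b by (intro divide_right_mono) auto
  from first second show ?thesis
    by (simp add: distrib_right)
qed

lemma nn_integral_radial_powr_indicator_le:
  assumes b: "0 \<le> b" "b < n" and E [measurable]: "E \<in> sets borel"
  shows "(\<integral>\<^sup>+y. ennreal (y powr -b) * indicator E y \<partial>radial_measure n)
    \<le> ennreal (1 + 1 / (n - b)) * enn_powr (emeasure (radial_measure n) E) (1 - b/n)"
proof (cases "emeasure (radial_measure n) E" rule: ennreal_cases)
  case (real m)
  define a where "a = 1 - b/n"
  have n: "0 < n" and a: "0 < a" "a \<le> 1"
    using b by (auto simp: a_def)
  have "(\<integral>\<^sup>+y. ennreal (y powr -b) * indicator E y \<partial>radial_measure n)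
      \<le> ennreal ((1 + 1 / (n - b)) * m powr a)"
  proof (cases "m \<le> 1")
    case True
    have "(\<integral>\<^sup>+y. ennreal (y powr -b) * indicator E y \<partial>radial_measure n) \<le> ennreal m"
      using nn_integral_radial_powr_indicator_split[OF b order_refl E] real by simp
    also have "m \<le> m powr a"
      using True real a powr_mono'[of a 1 m] by (cases "m = 0") auto
    also have "\<dots> \<le> (1 + 1 / (n - b)) * m powr a"
      using b by (simp add: mult_le_cancel_right1)
    finally show ?thesis
      by (simp add: ennreal_leI)
  next
    case False
    define r where "r = m powr (1/n)"
    have r: "1 \<le> r"
      unfolding r_def using False n by (intro ge_one_powr_ge_zero) auto
    have "(\<integral>\<^sup>+y. ennreal (y powr -b) * indicator E y \<partial>radial_measure n)
        \<le> ennreal (r powr -b) * ennreal m + ennreal ((r powr (n - b) - 1) / (n - b))"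
      using nn_integral_radial_powr_indicator_split[OF b r E] real by simp
    also have "\<dots> = ennreal (r powr -b * m + (r powr (n - b) - 1) / (n - b))"
      using r b real by (simp add: ennreal_plus ennreal_mult ge_one_powr_ge_zero)
    also have "\<dots> \<le> ennreal ((1 + 1 / (n - b)) * m powr a)"
      unfolding r_def a_def using b False by (intro ennreal_leI powr_split_bound_at_optimal_radius) auto
    finally show ?thesis .
  qed
  moreover have "0 \<le> 1 + 1 / (n - b)"
    using b by simp
  ultimately show ?thesis
    using real by (simp add: a_def ennreal_mult)
next
  case top
  have "ennreal (1 + 1 / (n - b)) \<noteq> 0"
    using b by simp
  with top show ?thesis by (simp add: ennreal_mult_top)
qed

text \<open>Hoelder's inequality between L^(p,1) and the weak L^(p',infinity) weight of the previous
  lemma, via the layer cake formula |f y| = integral_0^infinity [s < |f y|] ds.\<close>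
lemma nn_integral_radial_powr_abs_le_lorentz_p1:
  assumes n: "0 < n" and p: "1 < p" and f [measurable]: "f \<in> borel_measurable borel"
  shows "(\<integral>\<^sup>+y. ennreal (y powr -(n - n/p) * \<bar>f y\<bar>) \<partial>radial_measure n)
    \<le> ennreal (1 + p/n) * lorentz_p1 (radial_measure n) p f"
proof -
  define b where "b = n - n/p"
  have b: "0 \<le> b" "b < n"
    using n p by (auto simp: b_def field_simps)
  have exponents: "1 / (n - b) = p/n" "1 - b/n = 1/p"
    using n p by (simp_all add: b_def field_simps)
  define K where "K y s = ennreal (y powr -b) * indicator {y. s < \<bar>f y\<bar>} y * indicator {0<..} s" for y s
  have [measurable]: "case_prod K \<in> borel_measurable (radial_measure n \<Otimes>\<^sub>M lborel)"
    unfolding K_def by measurable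
  have superlevel_sets: "{y. s < \<bar>f y\<bar>} \<in> sets borel" for s
    by measurable
  interpret pair_sigma_finite "radial_measure n" lborel
    by (intro pair_sigma_finite.intro sigma_finite_radial_measure sigma_finite_lborel)
  have "(\<integral>\<^sup>+y. ennreal (y powr -b * \<bar>f y\<bar>) \<partial>radial_measure n)
      = (\<integral>\<^sup>+y. \<integral>\<^sup>+s. K y s \<partial>lborel \<partial>radial_measure n)"
  proof (intro nn_integral_cong)
    fix y
    have "(\<integral>\<^sup>+s. K y s \<partial>lborel) = ennreal (y powr -b) * (\<integral>\<^sup>+s. indicator {0<..<\<bar>f y\<bar>} s \<partial>lborel)"
      unfolding K_def
      by (subst nn_integral_cmult[symmetric]) (auto intro!: nn_integral_cong simp: indicator_def)
    then show "ennreal (y powr -b * \<bar>f y\<bar>) = (\<integral>\<^sup>+s. K y s \<partial>lborel)"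
      by (simp add: ennreal_mult)
  qed
  also have "\<dots> = (\<integral>\<^sup>+s. \<integral>\<^sup>+y. K y s \<partial>radial_measure n \<partial>lborel)"
    by (rule Fubini'[symmetric]) measurable
  also have "\<dots> \<le> (\<integral>\<^sup>+s. ennreal (1 + p/n) *
      (enn_powr (distfun (radial_measure n) f s) (1/p) * indicator {0<..} s) \<partial>lborel)"
  proof (intro nn_integral_mono)
    fix s
    have "(\<integral>\<^sup>+y. K y s \<partial>radial_measure n)
        = (\<integral>\<^sup>+y. ennreal (y powr -b) * indicator {y. s < \<bar>f y\<bar>} y \<partial>radial_measure n) * indicator {0<..} s"
      unfolding K_def by (simp add: nn_integral_multc)
    also have "\<dots> \<le> ennreal (1 + p/n) * enn_powr (distfun (radial_measure n) f s) (1/p) * indicator {0<..} s"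
      unfolding distfun_radial_measure exponents[symmetric] using superlevel_sets
      by (intro mult_right_mono nn_integral_radial_powr_indicator_le b) auto
    finally show "(\<integral>\<^sup>+y. K y s \<partial>radial_measure n) \<le> ennreal (1 + p/n) *
      (enn_powr (distfun (radial_measure n) f s) (1/p) * indicator {0<..} s)"
      by (simp add: ac_simps)
  qed
  also have "\<dots> \<le> ennreal (1 + p/n) * lorentz_p1 (radial_measure n) p f"
    using p by (simp add: nn_integral_cmult mult_left_mono nn_integral_distfun_powr_le_lorentz_p1)
  finally show ?thesis
    by (simp add: b_def)
qed

section \<open>Decay of R2 and the weak Lorentz norm\<close>

lemma norm_integral_le_nn_integral_norm:
  "ennreal (norm (integral\<^sup>L M f)) \<le> (\<integral>\<^sup>+x. ennreal (norm (f x)) \<partial>M)"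
  by (cases "integrable M f") (simp_all add: integral_norm_bound_ennreal not_integrable_integral_eq)

lemma R2_eq_0: "x < 1 \<Longrightarrow> R2 n \<alpha>' \<beta>' f x = 0"
  by (simp add: R2_def set_lebesgue_integral_def)

lemma abs_set_integral_radial_powr_le:
  assumes n: "0 < n" and p: "1 < p" and f [measurable]: "f \<in> borel_measurable borel"
    and e: "0 \<le> e" "n - n/p - \<beta>' \<le> e"
  shows "ennreal \<bar>LINT y:{1..x}|radial_measure n. y powr -\<beta>' * f y\<bar>
    \<le> ennreal (x powr e) * (ennreal (1 + p/n) * lorentz_p1 (radial_measure n) p f)"
proof -
  define b where "b = n - n/p"
  have pointwise: "y powr -\<beta>' * \<bar>f y\<bar> \<le> x powr e * (y powr -b * \<bar>f y\<bar>)" if "1 \<le> y" "y \<le> x" for y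
  proof -
    have "y powr -\<beta>' = y powr (b - \<beta>') * y powr -b"
      using that by (simp flip: powr_add)
    also have "\<dots> \<le> x powr e * y powr -b"
      using that e by (intro mult_right_mono order_trans[OF powr_mono powr_mono2]) (auto simp: b_def)
    finally show ?thesis
      by (simp add: mult_right_mono flip: mult.assoc)
  qed
  have "ennreal \<bar>LINT y:{1..x}|radial_measure n. y powr -\<beta>' * f y\<bar>
      \<le> (\<integral>\<^sup>+y. ennreal (norm (indicator {1..x} y *\<^sub>R (y powr -\<beta>' * f y))) \<partial>radial_measure n)"
    unfolding set_lebesgue_integral_def real_norm_def[symmetric]
    by (rule norm_integral_le_nn_integral_norm)
  also have "\<dots> \<le> (\<integral>\<^sup>+y. ennreal (x powr e) * ennreal (y powr -b * \<bar>f y\<bar>) \<partial>radial_measure n)"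
    using pointwise
    by (intro nn_integral_mono)
      (auto simp: indicator_def abs_mult ennreal_mult[symmetric] mult.assoc intro!: ennreal_leI mult_right_mono)
  also have "\<dots> \<le> ennreal (x powr e) * (ennreal (1 + p/n) * lorentz_p1 (radial_measure n) p f)"
    unfolding b_def
    using nn_integral_radial_powr_abs_le_lorentz_p1[OF n p f] by (simp add: nn_integral_cmult mult_left_mono)
  finally show ?thesis .
qed

lemma abs_R2_le:
  assumes n: "0 < n" and p: "1 < p" and f [measurable]: "f \<in> borel_measurable borel"
    and fin: "lorentz_p1 (radial_measure n) p f < \<infinity>"
    and \<gamma>: "\<gamma> \<le> \<alpha>'" "\<gamma> \<le> \<alpha>' + \<beta>' - (n - n/p)" and x: "1 \<le> x"
  shows "\<bar>R2 n \<alpha>' \<beta>' f x\<bar> \<le> (1 + p/n) * enn2real (lorentz_p1 (radial_measure n) p f) * x powr -\<gamma>"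
proof -
  define e where "e = \<alpha>' - \<gamma>"
  define L where "L = lorentz_p1 (radial_measure n) p f"
  have "ennreal \<bar>LINT y:{1..x}|radial_measure n. y powr -\<beta>' * f y\<bar> \<le> ennreal (x powr e) * (ennreal (1 + p/n) * L)"
    unfolding L_def using \<gamma> by (intro abs_set_integral_radial_powr_le n p f) (auto simp: e_def)
  also have "\<dots> = ennreal (x powr e * ((1 + p/n) * enn2real L))"
    using fin n p by (simp add: L_def ennreal_mult ennreal_enn2real_if)
  finally have "\<bar>LINT y:{1..x}|radial_measure n. y powr -\<beta>' * f y\<bar> \<le> x powr e * ((1 + p/n) * enn2real L)"
    using n p by (simp add: ennreal_le_iff)
  then have "\<bar>R2 n \<alpha>' \<beta>' f x\<bar> \<le> x powr -\<alpha>' * (x powr e * ((1 + p/n) * enn2real L))"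
    unfolding R2_def abs_mult by (simp add: mult_left_mono)
  also have "\<dots> = (1 + p/n) * enn2real L * x powr -\<gamma>"
    using x by (simp add: e_def ac_simps flip: powr_add)
  finally show ?thesis
    unfolding L_def .
qed

lemma R2_measurable [measurable]:
  assumes [measurable]: "f \<in> borel_measurable borel"
  shows "R2 n \<alpha>' \<beta>' f \<in> borel_measurable borel"
proof -
  interpret sigma_finite_measure "radial_measure n"
    by (rule sigma_finite_radial_measure)
  show ?thesis
    unfolding R2_def set_lebesgue_integral_def indicator_def atLeastAtMost_iff by measurable
qed

lemma distfun_radial_measure_le_of_decay:
  assumes n: "1 \<le> n" and \<gamma>: "0 < \<gamma>" and A: "0 \<le> A"
    and decay: "\<And>x. 1 \<le> x \<Longrightarrow> \<bar>F x\<bar> \<le> A * x powr -\<gamma>"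
    and vanish: "\<And>x. x < 1 \<Longrightarrow> F x = 0"
    and R: "1 \<le> R" and s: "A * R powr -\<gamma> < s"
  shows "distfun (radial_measure n) F s \<le> ennreal (R powr n - 1)"
proof -
  have "{x. s < \<bar>F x\<bar>} \<subseteq> {1..R}"
  proof
    fix x assume "x \<in> {x. s < \<bar>F x\<bar>}"
    then have x: "s < \<bar>F x\<bar>" by simp
    have "0 \<le> A * R powr -\<gamma>"
      using A by simp
    with s x vanish have "1 \<le> x"
      by (cases "1 \<le> x") auto
    moreover have "x \<le> R"
    proof (rule ccontr)
      assume "\<not> x \<le> R"
      then have "A * x powr -\<gamma> \<le> A * R powr -\<gamma>"
        using \<gamma> R A by (intro mult_left_mono powr_mono2') auto
      with s x decay[OF \<open>1 \<le> x\<close>] show False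
        by linarith
    qed
    ultimately show "x \<in> {1..R}" by simp
  qed
  then have "distfun (radial_measure n) F s \<le> emeasure (radial_measure n) {1..R}"
    unfolding distfun_radial_measure by (intro emeasure_mono) auto
  also have "\<dots> = ennreal ((R powr n - 1) / n)"
    using n R by (simp add: emeasure_radial_measure_Icc)
  also have "\<dots> \<le> ennreal (R powr n - 1)"
    using divide_left_mono[of 1 n "R powr n - 1"] n R by (intro ennreal_leI) (simp add: ge_one_powr_ge_zero)
  finally show ?thesis .
qed

lemma lorentz_qinf_radial_measure_le:
  assumes n: "1 \<le> n" and \<gamma>: "0 < \<gamma>" "n / \<gamma> \<le> q" and A: "0 \<le> A"
    and decay: "\<And>x. 1 \<le> x \<Longrightarrow> \<bar>F x\<bar> \<le> A * x powr -\<gamma>"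
    and vanish: "\<And>x. x < 1 \<Longrightarrow> F x = 0"
  shows "lorentz_qinf (radial_measure n) q F \<le> ennreal A"
  unfolding lorentz_qinf_def
proof (rule SUP_least)
  fix t :: real
  assume "t \<in> {0<..}"
  then have t: "0 < t" by simp
  have "0 < n / \<gamma>"
    using \<gamma> n by simp
  with \<gamma> have q: "0 < q"
    by linarith
  have "1/q \<le> \<gamma>/n"
    using \<gamma> n q by (simp add: field_simps)
  \<comment> \<open>R is chosen with mu_n([1,R]) <= t, so that f*(t) <= A R^(-gamma).\<close>
  define T where "T = max 1 t"
  define R where "R = T powr (1/n)"
  have T: "1 \<le> T" "t \<le> T" "T - 1 \<le> t"
    using t by (auto simp: T_def)
  have R: "1 \<le> R" "R powr n = T" "R powr -\<gamma> = T powr (-\<gamma>/n)"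
    using T n by (auto simp: R_def powr_powr ge_one_powr_ge_zero)
  have rearr_bound: "rearr (radial_measure n) F t \<le> ennreal (A * R powr -\<gamma>)"
  proof (rule rearr_leI)
    fix s assume "A * R powr -\<gamma> < s"
    with n \<gamma>(1) A decay vanish R(1) have "distfun (radial_measure n) F s \<le> ennreal (R powr n - 1)"
      by (rule distfun_radial_measure_le_of_decay)
    also have "\<dots> \<le> ennreal t"
      using R(2) T(3) by (intro ennreal_leI) simp
    finally show "distfun (radial_measure n) F s \<le> ennreal t" .
  qed (use A in simp)
  have real_bound: "t powr (1/q) * (A * R powr -\<gamma>) \<le> A"
  proof -
    have "t powr (1/q) \<le> T powr (1/q)"
      using T t q by (intro powr_mono2) auto
    have "t powr (1/q) * (A * R powr -\<gamma>) = A * (t powr (1/q) * T powr (-\<gamma>/n))"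
      by (simp add: R(3) ac_simps)
    also have "\<dots> \<le> A * (T powr (1/q) * T powr (-\<gamma>/n))"
      using A \<open>t powr (1/q) \<le> T powr (1/q)\<close> by (intro mult_left_mono mult_right_mono) auto
    also have "T powr (1/q) * T powr (-\<gamma>/n) \<le> 1"
      using T \<open>1/q \<le> \<gamma>/n\<close> powr_mono[of "1/q - \<gamma>/n" 0 T] by (simp flip: powr_add)
    then have "A * (T powr (1/q) * T powr (-\<gamma>/n)) \<le> A"
      using A by (rule mult_left_le)
    finally show ?thesis .
  qed
  have "ennreal (t powr (1/q)) * rearr (radial_measure n) F t
      \<le> ennreal (t powr (1/q)) * ennreal (A * R powr -\<gamma>)"
    using rearr_bound by (rule mult_left_mono) simp
  also have "\<dots> = ennreal (t powr (1/q) * (A * R powr -\<gamma>))"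
    using A by (simp add: ennreal_mult)
  also have "\<dots> \<le> ennreal A"
    using real_bound by (rule ennreal_leI)
  finally show "ennreal (t powr (1/q)) * rearr (radial_measure n) F t \<le> ennreal A" .
qed

lemma admissible_decay_exponent:
  fixes n1 n2 \<alpha>' \<beta>' p q :: real
  assumes n1: "n1 > 0" and \<beta>: "\<beta>' \<ge> 0" and \<alpha>: "\<alpha>' > 0" and p: "1 < p"
    and "if \<beta>' > 0 \<and> p / (p - 1) \<ge> n1 / \<beta>'
         then q \<ge> n2 / \<alpha>'
         else (\<alpha>' + \<beta>' - n1 / (p / (p - 1)) > 0 \<and> q \<ge> n2 / (\<alpha>' + \<beta>' - n1 / (p / (p - 1))))"
  shows "\<exists>\<gamma>>0. \<gamma> \<le> \<alpha>' \<and> \<gamma> \<le> \<alpha>' + \<beta>' - (n1 - n1/p) \<and> n2 / \<gamma> \<le> q"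
proof -
  define p' where "p' = p / (p - 1)"
  have p': "0 < p'" "n1 / p' = n1 - n1/p"
    using p by (simp_all add: p'_def field_simps)
  have cond: "if \<beta>' > 0 \<and> p' \<ge> n1 / \<beta>' then q \<ge> n2 / \<alpha>'
      else \<alpha>' + \<beta>' - n1 / p' > 0 \<and> q \<ge> n2 / (\<alpha>' + \<beta>' - n1 / p')"
    using assms(5) unfolding p'_def .
  show ?thesis
  proof (cases "\<beta>' > 0 \<and> p' \<ge> n1 / \<beta>'")
    case True
    then have "n1 \<le> p' * \<beta>'"
      using pos_divide_le_eq[of \<beta>' n1 p'] by simp
    with p'(1) have "n1 / p' \<le> \<beta>'"
      using pos_divide_le_eq[of p' n1 \<beta>'] by (simp add: mult.commute)
    with True cond \<alpha> show ?thesis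
      unfolding p'(2)[symmetric] by (intro exI[of _ \<alpha>']) auto
  next
    case False
    have "\<beta>' \<le> n1 / p'"
    proof (cases "\<beta>' = 0")
      case False
      with \<open>\<not> (\<beta>' > 0 \<and> p' \<ge> n1 / \<beta>')\<close> \<beta> have "p' * \<beta>' < n1"
        using pos_less_divide_eq[of \<beta>' p' n1] by simp
      with p'(1) show ?thesis
        using pos_le_divide_eq[of p' \<beta>' n1] by (simp add: mult.commute)
    qed (use n1 p'(1) in simp)
    with False cond show ?thesis
      unfolding p'(2)[symmetric] by (intro exI[of _ "\<alpha>' + \<beta>' - n1 / p'"]) auto
  qed
qed

theorem lemma2p4:
  fixes n1 n2 \<alpha>' \<beta>' p q :: real
  assumes "n1 > 1" and "n2 > 1"
    and "\<beta>' \<ge> 0" and "\<alpha>' > 0"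
    and "1 < p"
    and "if \<beta>' > 0 \<and> p / (p - 1) \<ge> n1 / \<beta>'
         then q \<ge> n2 / \<alpha>'
         else (\<alpha>' + \<beta>' - n1 / (p / (p - 1)) > 0 \<and> q \<ge> n2 / (\<alpha>' + \<beta>' - n1 / (p / (p - 1))))"
  shows "\<exists>C::real. \<forall>f. f \<in> borel_measurable (radial_measure n1)
            \<and> lorentz_p1 (radial_measure n1) p f < \<infinity> \<longrightarrow>
           R2 n1 \<alpha>' \<beta>' f \<in> borel_measurable (radial_measure n2)
           \<and> lorentz_qinf (radial_measure n2) q (R2 n1 \<alpha>' \<beta>' f)
               \<le> ennreal C * lorentz_p1 (radial_measure n1) p f"
proof -
  have n1: "0 < n1" and n2: "1 \<le> n2"
    using assms(1,2) by simp_all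
  obtain \<gamma> where \<gamma>: "0 < \<gamma>" "\<gamma> \<le> \<alpha>'" "\<gamma> \<le> \<alpha>' + \<beta>' - (n1 - n1/p)" "n2 / \<gamma> \<le> q"
    using admissible_decay_exponent[OF n1 assms(3-6)] by blast
  show ?thesis
  proof (rule exI[of _ "1 + p/n1"], intro allI impI conjI)
    fix f :: "real \<Rightarrow> real"
    assume "f \<in> borel_measurable (radial_measure n1) \<and> lorentz_p1 (radial_measure n1) p f < \<infinity>"
    then have f [measurable]: "f \<in> borel_measurable borel" and fin: "lorentz_p1 (radial_measure n1) p f < \<infinity>"
      using measurable_cong_sets[OF sets_radial_measure refl] by auto
    then show "R2 n1 \<alpha>' \<beta>' f \<in> borel_measurable (radial_measure n2)"
      by measurable
    have "lorentz_qinf (radial_measure n2) q (R2 n1 \<alpha>' \<beta>' f)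
        \<le> ennreal ((1 + p/n1) * enn2real (lorentz_p1 (radial_measure n1) p f))"
      using abs_R2_le[OF n1 assms(5) f fin \<gamma>(2,3)] R2_eq_0 n1 assms(5)
      by (intro lorentz_qinf_radial_measure_le[OF n2 \<gamma>(1,4)]) auto
    also have "\<dots> = ennreal (1 + p/n1) * lorentz_p1 (radial_measure n1) p f"
      using fin n1 assms(5) by (simp add: ennreal_mult)
    finally show "lorentz_qinf (radial_measure n2) q (R2 n1 \<alpha>' \<beta>' f)
        \<le> ennreal (1 + p/n1) * lorentz_p1 (radial_measure n1) p f" .
  qed
qed

end
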